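(* Let $n\ge1$, let $V$ be a real symmetric positive-definite $2n\times 2n$ matrix, $\mathbf{d}\in\mathbb{R}^{2n}$, $V_0\in\mathbb{R}$, and $\mathcal{E}(\mathbf{z})=V_0+(\mathbf{z}-\mathbf{d})^TV(\mathbf{z}-\mathbf{d})$. Let $f_0:\mathbb{R}^{2n}\to[0,\infty)$ be measurable, not almost everywhere zero, with $\int f_0<\infty$ and $\int|\mathbf{z}|^2f_0(\mathbf{z})\,d^{2n}\mathbf{z}<\infty$. Define $N=\int f_0(\mathbf{z})\,d^{2n}\mathbf{z}$, $\mathbf{c}=\frac1N\int \mathbf{z}f_0(\mathbf{z})\,d^{2n}\mathbf{z}$ and $H=\int(\mathbf{z}\otimes\mathbf{z})f_0(\mathbf{z}+\mathbf{c})\,d^{2n}\mathbf{z}$. Then \[ E_{SL(2n)}:=\inf_{\mathbf{b}\in\mathbb{R}^{2n},\,A\in SL(2n)}\int \mathcal{E}(\mathbf{z})f_0(A^{-1}\mathbf{z}+\mathbf{b})\,d^{2n}\mathbf{z} \;=\; NV_0+2n\,\det(VH)^{1/(2n)}. \]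
   Context: $SL(2n)$ denotes the group of real $2n\times 2n$ matrices of determinant $1$. *)

theory Defs
  imports "HOL-Analysis.Analysis"
begin

end

(*
  Substituting z = A (y + c - b) turns the cost of (A, b) into

    N V0 + tr (A^T V A H) + N e^T V e,    e = A (c - b) - d,

  because f0 (. + c) has mass N, vanishing first moment and second moment H.
  The last term is nonnegative and vanishes for b = c - A^-1 d.  Writing H = R^T R,
  tr (A^T V A H) is the trace of the positive semidefinite matrix (A R^T)^T V (A R^T),
  whose determinant is det V det H when det A = 1; the AM-GM inequality for its
  eigenvalues bounds the trace below by 2n (det V det H)^(1/2n).  Equality holds for
  A = mu P Q^T, where P^T V P = Q^T H Q = I and mu > 0 is chosen to make det A = 1.
*)

theory Submission
  imports Defs
begin

section \<open>Symmetric matrices\<close>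

definition pos_semidef :: "real^'n^'n \<Rightarrow> bool" where
  "pos_semidef S \<longleftrightarrow> transpose S = S \<and> (\<forall>x. 0 \<le> x \<bullet> (S *v x))"

definition pos_def :: "real^'n^'n \<Rightarrow> bool" where
  "pos_def S \<longleftrightarrow> transpose S = S \<and> (\<forall>x. x \<noteq> 0 \<longrightarrow> 0 < x \<bullet> (S *v x))"

lemma pos_def_imp_pos_semidef: "pos_def S \<Longrightarrow> pos_semidef S"
  unfolding pos_def_def pos_semidef_def by (metis inner_zero_left less_eq_real_def)

lemma symmetric_matrix_inner_commute:
  fixes S :: "real^'n^'n"
  assumes "transpose S = S"
  shows "(S *v x) \<bullet> y = x \<bullet> (S *v y)"
  by (metis assms dot_lmul_matrix vector_transpose_matrix)

lemma inner_congruence: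
  fixes P S :: "real^'n^'n"
  shows "x \<bullet> ((transpose P ** S ** P) *v x) = (P *v x) \<bullet> (S *v (P *v x))"
proof -
  have "x \<bullet> (transpose P *v y) = (P *v x) \<bullet> y" for y
    by (metis dot_lmul_matrix vector_transpose_matrix)
  then show ?thesis by (simp only: matrix_vector_mul_assoc[symmetric])
qed

lemma pos_semidef_congruence:
  fixes P S :: "real^'n^'n"
  assumes "pos_semidef S"
  shows "pos_semidef (transpose P ** S ** P)"
  using assms by (simp add: pos_semidef_def inner_congruence matrix_transpose_mul matrix_mul_assoc)

definition diag_mat :: "('n \<Rightarrow> real) \<Rightarrow> real^'n^'n" where
  "diag_mat l = (\<chi> i j. if i = j then l i else 0)"

lemma diag_mat_mult:
  fixes a b :: "'n::finite \<Rightarrow> real"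
  shows "diag_mat a ** diag_mat b = diag_mat (\<lambda>i. a i * b i)"
proof -
  have "(\<Sum>k\<in>UNIV. (if i = k then a i else 0) * (if k = j then b k else 0))
      = (if i = j then a i * b i else 0)" for i j :: 'n
  proof -
    have "(\<Sum>k\<in>UNIV. (if i = k then a i else 0) * (if k = j then b k else 0))
        = (\<Sum>k\<in>UNIV. if k = i then a i * (if i = j then b i else 0) else 0)"
      by (rule sum.cong) auto
    then show ?thesis by simp
  qed
  then show ?thesis by (simp add: diag_mat_def matrix_matrix_mult_def vec_eq_iff)
qed

lemma transpose_diag_mat [simp]: "transpose (diag_mat l) = diag_mat l"
  by (simp add: diag_mat_def transpose_def vec_eq_iff)

lemma det_diag_mat: "det (diag_mat l) = prod l UNIV"
  by (subst det_diagonal) (simp_all add: diag_mat_def)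

lemma trace_diag_mat: "trace (diag_mat l) = sum l UNIV"
  by (simp add: trace_def diag_mat_def)

lemma diag_mat_one: "diag_mat (\<lambda>_. 1) = mat 1"
  by (simp add: diag_mat_def mat_def)

lemma nonpos_if_le_all_pos_mult:
  fixes a c :: real
  assumes le: "\<And>t. 0 < t \<Longrightarrow> a \<le> t * c"
  shows "a \<le> 0"
proof (rule ccontr)
  assume a: "\<not> a \<le> 0"
  show False
  proof (cases "c \<le> 0")
    case True
    with le[of 1] a show False by simp
  next
    case False
    with le[of "a / (2 * c)"] a show False by simp
  qed
qed

lemma pos_semidef_on_invariant_subspace_null:
  fixes T :: "real^'n^'n"
  assumes sym: "transpose T = T" and W: "subspace W" and inv: "\<forall>x\<in>W. T *v x \<in> W"
    and psd: "\<forall>y\<in>W. 0 \<le> y \<bullet> (T *v y)" and v: "v \<in> W" and null: "v \<bullet> (T *v v) = 0"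
  shows "T *v v = 0"
proof -
  define w where "w = T *v v"
  have w: "w \<in> W" using inv v by (simp add: w_def)
  have "2 * (w \<bullet> w) \<le> t * (w \<bullet> (T *v w))" if "0 < t" for t
  proof -
    have "0 \<le> (v - t *\<^sub>R w) \<bullet> (T *v (v - t *\<^sub>R w))"
      using psd W v w by (simp add: subspace_diff subspace_scale)
    also have "\<dots> = v \<bullet> (T *v v) - 2 * t * (w \<bullet> w) + t\<^sup>2 * (w \<bullet> (T *v w))"
      using symmetric_matrix_inner_commute[OF sym, of v w]
      by (simp add: matrix_vector_mult_diff_distrib matrix_vector_mult_scaleR inner_diff_left
          inner_diff_right w_def power2_eq_square inner_commute algebra_simps)
    finally show ?thesis using null \<open>0 < t\<close>
      by (simp add: power2_eq_square)
  qed
  then have "w \<bullet> w \<le> 0"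
    using nonpos_if_le_all_pos_mult[of "2 * (w \<bullet> w)" "w \<bullet> (T *v w)"] by simp
  then show ?thesis
    by (metis w_def inner_eq_zero_iff inner_ge_zero order_antisym)
qed

lemma symmetric_matrix_eigenvector_in_subspace:
  fixes S :: "real^'n^'n"
  assumes sym: "transpose S = S" and W: "subspace W" and inv: "\<forall>x\<in>W. S *v x \<in> W"
    and nontriv: "W \<noteq> {0}"
  obtains v l where "v \<in> W" "norm v = 1" "S *v v = l *\<^sub>R v"
proof -
  let ?q = "\<lambda>x. x \<bullet> (S *v x)"
  let ?K = "W \<inter> sphere 0 1"
  obtain x where "x \<in> W" "x \<noteq> 0" using nontriv W subspace_0 by blast
  then have "x /\<^sub>R norm x \<in> ?K" using W by (simp add: subspace_scale)
  then have ne: "?K \<noteq> {}" by blast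
  have "compact ?K"
    by (intro closed_Int_compact closed_subspace W compact_sphere)
  moreover have "continuous_on ?K ?q"
    by (intro continuous_intros linear_continuous_on matrix_vector_mul_bounded_linear)
  ultimately obtain v where v: "v \<in> ?K" and max: "\<And>y. y \<in> ?K \<Longrightarrow> ?q y \<le> ?q v"
    using continuous_attains_sup[OF _ ne] by blast
  define M where "M = ?q v"
  \<comment> \<open>The maximum of the Rayleigh quotient makes \<open>M I - S\<close> positive semidefinite on \<open>W\<close>.\<close>
  define T where "T = M *\<^sub>R mat 1 - S"
  have T_apply: "T *v y = M *\<^sub>R y - S *v y" for y
    by (simp add: T_def matrix_vector_mult_diff_rdistrib flip: scaleR_matrix_vector_assoc)
  have "0 \<le> y \<bullet> (T *v y)" if "y \<in> W" for y
  proof (cases "y = 0")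
    case False
    then have "y /\<^sub>R norm y \<in> ?K" using W that by (simp add: subspace_scale)
    then have "?q (y /\<^sub>R norm y) \<le> M" using max M_def by blast
    moreover have "?q (y /\<^sub>R norm y) = ?q y / (y \<bullet> y)"
      by (simp add: matrix_vector_mult_scaleR power2_eq_square divide_inverse
          flip: power2_norm_eq_inner)
    ultimately have "?q y \<le> M * (y \<bullet> y)"
      using False by (simp add: divide_le_eq)
    then show ?thesis by (simp add: T_apply inner_diff_right)
  qed simp
  moreover have "transpose T = T" using sym by (simp add: T_def transpose_def vec_eq_iff mat_def)
  moreover have "\<forall>x\<in>W. T *v x \<in> W" using W inv by (simp add: T_apply subspace_diff subspace_scale)
  moreover have "v \<bullet> (T *v v) = 0"
    using v by (simp add: T_apply inner_diff_right M_def norm_eq_1)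
  ultimately have "T *v v = 0"
    using pos_semidef_on_invariant_subspace_null[OF _ W] v by simp
  then have "S *v v = M *\<^sub>R v" by (simp add: T_apply)
  with v show ?thesis by (intro that[of v M]) auto
qed

lemma dim_le_Suc_dim_orthogonal_slice:
  fixes W :: "(real^'n) set"
  assumes W: "subspace W" and v: "v \<in> W" "norm v = 1"
  shows "dim W \<le> Suc (dim (W \<inter> {x. orthogonal v x}))"
proof -
  let ?W' = "W \<inter> {x. orthogonal v x}"
  have "W \<subseteq> span (insert v ?W')"
  proof
    fix x assume x: "x \<in> W"
    have "x - (v \<bullet> x) *\<^sub>R v \<in> ?W'"
      using x v W by (simp add: orthogonal_def subspace_diff subspace_scale inner_diff_right norm_eq_1)
    then have "(x - (v \<bullet> x) *\<^sub>R v) + (v \<bullet> x) *\<^sub>R v \<in> span (insert v ?W')"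
      by (intro span_add span_mul) (auto intro: span_base)
    then show "x \<in> span (insert v ?W')" by simp
  qed
  then have "dim W \<le> dim (insert v ?W')"
    using dim_subset dim_span by metis
  also have "\<dots> \<le> Suc (dim ?W')" by (simp add: dim_insert)
  finally show ?thesis .
qed

lemma orthonormal_eigenvectors_in_subspace:
  fixes S :: "real^'n^'n"
  assumes sym: "transpose S = S"
  shows "\<lbrakk>subspace W; \<forall>x\<in>W. S *v x \<in> W; k \<le> dim W\<rbrakk> \<Longrightarrow>
    \<exists>B\<subseteq>W. finite B \<and> card B = k \<and> pairwise orthogonal B \<and>
      (\<forall>v\<in>B. norm v = 1 \<and> (\<exists>l. S *v v = l *\<^sub>R v))"
proof (induction k arbitrary: W)
  case 0
  show ?case by (intro exI[of _ "{}"]) auto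
next
  case (Suc k)
  have "W \<noteq> {0}" using Suc.prems(3) by auto
  then obtain v l where v: "v \<in> W" "norm v = 1" and l: "S *v v = l *\<^sub>R v"
    using symmetric_matrix_eigenvector_in_subspace[OF sym Suc.prems(1,2)] by blast
  define W' where "W' = W \<inter> {x. orthogonal v x}"
  have W': "subspace W'"
    unfolding W'_def using Suc.prems(1) subspace_orthogonal_to_vector by (blast intro: subspace_inter)
  have "S *v x \<in> W'" if "x \<in> W'" for x
  proof -
    have "v \<bullet> (S *v x) = l * (v \<bullet> x)"
      using symmetric_matrix_inner_commute[OF sym, of v x] l by simp
    then show ?thesis using that Suc.prems(2) by (simp add: W'_def orthogonal_def)
  qed
  moreover have "k \<le> dim W'"
    using dim_le_Suc_dim_orthogonal_slice[OF Suc.prems(1) v] Suc.prems(3) by (simp add: W'_def)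
  ultimately obtain B where B: "B \<subseteq> W'" "finite B" "card B = k" "pairwise orthogonal B"
    and eig: "\<forall>u\<in>B. norm u = 1 \<and> (\<exists>l. S *v u = l *\<^sub>R u)"
    using Suc.IH[OF W'] by blast
  have "v \<notin> B" using B(1) v(2) by (auto simp: W'_def orthogonal_def norm_eq_1)
  moreover have "pairwise orthogonal (insert v B)"
    using B(1,4) by (auto simp: pairwise_insert W'_def orthogonal_commute)
  ultimately show ?case
    using B v l eig by (intro exI[of _ "insert v B"]) (auto simp: W'_def)
qed

theorem symmetric_matrix_orthogonal_diagonalization:
  fixes S :: "real^'n^'n"
  assumes sym: "transpose S = S"
  obtains U l where "orthogonal_matrix U" "S = U ** diag_mat l ** transpose U"
proof -
  obtain B where B: "finite B" "card B = CARD('n)" "pairwise orthogonal B"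
    and eig: "\<forall>u\<in>B. norm u = 1 \<and> (\<exists>l. S *v u = l *\<^sub>R u)"
    using orthonormal_eigenvectors_in_subspace[OF sym subspace_UNIV] by auto
  have "\<exists>u. bij_betw u (UNIV :: 'n set) B"
    by (rule finite_same_card_bij) (simp_all add: B)
  then obtain u where u: "bij_betw u (UNIV :: 'n set) B" ..
  have "\<forall>j. \<exists>l. S *v u j = l *\<^sub>R u j" using eig u bij_betwE by blast
  then obtain l where l: "\<And>j. S *v u j = l j *\<^sub>R u j" by metis
  define U :: "real^'n^'n" where "U = (\<chi> i j. u j $ i)"
  have col: "column j U = u j" for j by (simp add: U_def column_def)
  have "orthogonal_matrix U"
    unfolding orthogonal_matrix_orthonormal_columns col
    using u eig B(3) by (auto simp: bij_betw_def inj_on_def pairwise_def) metis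
  moreover have "S ** U = U ** diag_mat l"
    using l
    by (simp add: vec_eq_iff matrix_matrix_mult_def matrix_vector_mult_def U_def diag_mat_def
        if_distrib if_distribR sum.delta cong: if_cong)
  ultimately have "S = U ** diag_mat l ** transpose U"
    by (metis matrix_mul_assoc matrix_mul_rid orthogonal_matrix_def)
  with \<open>orthogonal_matrix U\<close> that show ?thesis by blast
qed

lemma orthogonal_matrix_congruence_diag_mat:
  fixes U S :: "real^'n^'n"
  assumes U: "orthogonal_matrix U" and S: "S = U ** diag_mat l ** transpose U"
  shows "l i = (U *v axis i 1) \<bullet> (S *v (U *v axis i 1))"
proof -
  have "transpose U ** S ** U = (transpose U ** U) ** diag_mat l ** (transpose U ** U)"
    by (simp add: S matrix_mul_assoc)
  also have "\<dots> = diag_mat l"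
    using U by (simp add: orthogonal_matrix_def)
  finally have "l i = (transpose U ** S ** U) $ i $ i"
    by (simp add: diag_mat_def)
  then have "l i = axis i 1 \<bullet> ((transpose U ** S ** U) *v axis i 1)"
    by (simp add: matrix_vector_mult_basis inner_axis' column_def)
  then show ?thesis by (simp only: inner_congruence)
qed

lemma pos_semidef_diagonalization:
  fixes S :: "real^'n^'n"
  assumes "pos_semidef S"
  obtains U l where "orthogonal_matrix U" "S = U ** diag_mat l ** transpose U" "\<And>i. 0 \<le> l i"
proof -
  obtain U l where U: "orthogonal_matrix U" and S: "S = U ** diag_mat l ** transpose U"
    using symmetric_matrix_orthogonal_diagonalization assms pos_semidef_def by metis
  have "0 \<le> l i" for i
    using assms orthogonal_matrix_congruence_diag_mat[OF U S] by (simp add: pos_semidef_def)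
  with U S that show ?thesis by blast
qed

lemma pos_def_diagonalization:
  fixes S :: "real^'n^'n"
  assumes "pos_def S"
  obtains U l where "orthogonal_matrix U" "S = U ** diag_mat l ** transpose U" "\<And>i. 0 < l i"
proof -
  obtain U l where U: "orthogonal_matrix U" and S: "S = U ** diag_mat l ** transpose U"
    using symmetric_matrix_orthogonal_diagonalization assms pos_def_def by metis
  have "U *v axis i 1 \<noteq> 0" for i
    using U by (simp add: matrix_vector_mult_basis orthogonal_matrix_orthonormal_columns)
      (metis norm_zero zero_neq_one)
  then have "0 < l i" for i
    using assms orthogonal_matrix_congruence_diag_mat[OF U S] by (simp add: pos_def_def)
  with U S that show ?thesis by blast
qed

lemma det_orthogonal_congruence:
  fixes U M :: "real^'n^'n"
  assumes "orthogonal_matrix U"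
  shows "det (U ** M ** transpose U) = det M"
proof -
  have "det U * det U = 1"
    using det_orthogonal_matrix[OF assms] by auto
  then show ?thesis by (simp add: det_mul)
qed

lemma trace_orthogonal_congruence:
  fixes U M :: "real^'n^'n"
  assumes "orthogonal_matrix U"
  shows "trace (U ** M ** transpose U) = trace M"
  using assms trace_mul_sym[of "U ** M" "transpose U"]
  by (simp add: matrix_mul_assoc orthogonal_matrix_def)

lemma trace_ge_det_root:
  fixes S :: "real^'n^'n"
  assumes "pos_semidef S"
  shows "real CARD('n) * det S powr (1 / real CARD('n)) \<le> trace S"
proof -
  obtain U l where U: "orthogonal_matrix U" and S: "S = U ** diag_mat l ** transpose U"
    and l: "\<And>i. 0 \<le> l i"
    using pos_semidef_diagonalization[OF assms] by blast
  have "(\<Prod>i\<in>UNIV. l i) powr (1 / real CARD('n)) \<le> (\<Sum>i\<in>UNIV. l i / real CARD('n))"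
    using arith_geom_mean[of UNIV l] l by simp
  then show ?thesis
    by (simp add: S det_orthogonal_congruence[OF U] trace_orthogonal_congruence[OF U]
        det_diag_mat trace_diag_mat field_simps flip: sum_divide_distrib)
qed

lemma pos_semidef_factorization:
  fixes S :: "real^'n^'n"
  assumes "pos_semidef S"
  obtains R :: "real^'n^'n" where "S = transpose R ** R"
proof -
  obtain U l where U: "orthogonal_matrix U" and S: "S = U ** diag_mat l ** transpose U"
    and l: "\<And>i. 0 \<le> l i"
    using pos_semidef_diagonalization[OF assms] by blast
  let ?R = "diag_mat (\<lambda>i. sqrt (l i)) ** transpose U"
  have "diag_mat l = diag_mat (\<lambda>i. sqrt (l i)) ** diag_mat (\<lambda>i. sqrt (l i))"
    using l by (simp add: diag_mat_mult)
  then have "S = transpose ?R ** ?R"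
    by (simp add: S matrix_transpose_mul matrix_mul_assoc)
  then show ?thesis using that by blast
qed

lemma pos_def_normalization:
  fixes S :: "real^'n^'n"
  assumes "pos_def S"
  obtains P where "transpose P ** S ** P = mat 1" "0 < det P"
proof -
  obtain U l where U: "orthogonal_matrix U" and S: "S = U ** diag_mat l ** transpose U"
    and l: "\<And>i. 0 < l i"
    using pos_def_diagonalization[OF assms] by blast
  let ?D = "diag_mat (\<lambda>i. 1 / sqrt (l i))"
  let ?P = "U ** ?D ** transpose U"
  have "transpose ?P ** S ** ?P = U ** (?D ** ((transpose U ** U) ** diag_mat l ** (transpose U ** U))
      ** ?D) ** transpose U"
    by (simp add: S matrix_transpose_mul matrix_mul_assoc)
  also have "\<dots> = U ** diag_mat (\<lambda>_. 1) ** transpose U"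
    using U l by (simp add: orthogonal_matrix_def diag_mat_mult abs_of_pos less_imp_neq[symmetric])
  also have "\<dots> = mat 1"
    using U by (simp add: diag_mat_one orthogonal_matrix_def)
  finally have "transpose ?P ** S ** ?P = mat 1" .
  moreover have "0 < det ?P"
    using l by (simp add: det_orthogonal_congruence[OF U] det_diag_mat prod_pos)
  ultimately show ?thesis by (rule that)
qed

lemma det_congruence_eq_mat_1:
  fixes P S :: "real^'n^'n"
  assumes "transpose P ** S ** P = mat 1"
  shows "(det P)\<^sup>2 * det S = 1"
  using arg_cong[OF assms, of det] by (simp add: det_mul power2_eq_square mult_ac)

lemma det_scaleR: "det (c *\<^sub>R A) = c ^ CARD('n) * det (A :: real^'n^'n)"
proof -
  have "c *\<^sub>R A = (c *\<^sub>R mat 1) ** A"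
    by (simp flip: scalar_matrix_assoc)
  also have "c *\<^sub>R mat 1 = diag_mat (\<lambda>_. c)"
    by (simp add: diag_mat_def mat_def vec_eq_iff)
  finally show ?thesis by (simp add: det_mul det_diag_mat)
qed

lemma trace_scaleR: "trace (c *\<^sub>R A) = c * trace (A :: real^'n^'n)"
  by (simp add: trace_def sum_distrib_left)

lemma trace_congruence_ge:
  fixes A V H :: "real^'n^'n"
  assumes V: "pos_semidef V" and H: "pos_semidef H" and A: "det A = 1"
  shows "real CARD('n) * (det V * det H) powr (1 / real CARD('n))
    \<le> trace (transpose A ** V ** A ** H)"
proof -
  obtain R :: "real^'n^'n" where R: "H = transpose R ** R"
    using pos_semidef_factorization[OF H] by blast
  let ?P = "A ** transpose R"
  have "trace (transpose A ** V ** A ** H) = trace ((transpose A ** V ** A ** transpose R) ** R)"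
    by (simp add: R matrix_mul_assoc)
  also have "\<dots> = trace (transpose ?P ** V ** ?P)"
    by (subst trace_mul_sym) (simp add: matrix_transpose_mul matrix_mul_assoc)
  finally have "trace (transpose A ** V ** A ** H) = trace (transpose ?P ** V ** ?P)" .
  moreover have "det (transpose ?P ** V ** ?P) = det V * det H"
    using A by (simp add: R det_mul)
  ultimately show ?thesis
    using trace_ge_det_root[OF pos_semidef_congruence[OF V, of ?P]] by simp
qed

lemma trace_congruence_attains:
  fixes V H :: "real^'n^'n"
  assumes V: "pos_def V" and H: "pos_def H"
  obtains A where "det A = 1"
    "trace (transpose A ** V ** A ** H) = real CARD('n) * (det V * det H) powr (1 / real CARD('n))"
proof -
  let ?m = "real CARD('n)"
  obtain P where P: "transpose P ** V ** P = mat 1" and detP: "0 < det P"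
    using pos_def_normalization[OF V] by blast
  obtain Q where Q: "transpose Q ** H ** Q = mat 1" and detQ: "0 < det Q"
    using pos_def_normalization[OF H] by blast
  define p where "p = det P * det Q"
  have p: "0 < p" using detP detQ by (simp add: p_def)
  define \<mu> where "\<mu> = p powr (- 1 / ?m)"
  define A where "A = \<mu> *\<^sub>R (P ** transpose Q)"
  have "\<mu> ^ CARD('n) = p powr (?m * (- 1 / ?m))"
    using p by (simp add: \<mu>_def powr_power)
  then have "\<mu> ^ CARD('n) = 1 / p"
    using p by (simp add: powr_minus_divide)
  then have "det A = 1"
    using detP detQ by (simp add: A_def det_scaleR det_mul p_def)
  moreover have "trace (transpose A ** V ** A ** H) = \<mu>\<^sup>2 * ?m"
  proof -
    have "transpose A ** V ** A ** H
        = \<mu>\<^sup>2 *\<^sub>R (Q ** ((transpose P ** V ** P) ** (transpose Q ** H)))"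
      by (simp add: A_def transpose_scalar matrix_transpose_mul matrix_scalar_ac matrix_mul_assoc
          power2_eq_square flip: scalar_matrix_assoc)
    also have "\<dots> = \<mu>\<^sup>2 *\<^sub>R (Q ** (transpose Q ** H))"
      by (simp add: P)
    finally show ?thesis
      using trace_mul_sym[of Q "transpose Q ** H"] Q
      by (simp add: trace_scaleR matrix_mul_assoc trace_I)
  qed
  moreover have "(det V * det H) powr (1 / ?m) = \<mu>\<^sup>2"
  proof -
    have "det V * det H * p\<^sup>2 = ((det P)\<^sup>2 * det V) * ((det Q)\<^sup>2 * det H)"
      by (simp add: p_def power_mult_distrib mult_ac)
    also have "\<dots> = 1"
      by (simp add: det_congruence_eq_mat_1 P Q)
    finally have "det V * det H * p\<^sup>2 = 1" .
    then have "det V * det H = p powr (- 2)"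
      using p by (simp add: powr_minus_divide powr_realpow field_simps)
    moreover have "\<mu>\<^sup>2 = p powr (- 2 / ?m)"
      using p by (simp add: \<mu>_def powr_power)
    ultimately show ?thesis
      by (simp add: powr_powr)
  qed
  ultimately show ?thesis using that by (simp add: mult.commute)
qed

section \<open>Lebesgue measure under affine maps\<close>

lemma measure_coordinate_swap_cbox:
  fixes a b :: "real^'n"
  shows "measure lebesgue ((\<lambda>x. \<chi> i. x $ Transposition.transpose m n i) ` cbox a b)
    = measure lebesgue (cbox a b)"
proof -
  let ?\<tau> = "Transposition.transpose m n"
  let ?h = "\<lambda>x::real^'n. \<chi> i. x $ ?\<tau> i"
  have box: "?h ` cbox a b = cbox (?h a) (?h b)"
  proof (intro set_eqI iffI)
    fix y assume "y \<in> ?h ` cbox a b"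
    then show "y \<in> cbox (?h a) (?h b)" by (auto simp: mem_box_cart)
  next
    fix y assume "y \<in> cbox (?h a) (?h b)"
    then have "?h y \<in> cbox a b" by (simp add: mem_box_cart) (metis transpose_involutory)
    moreover have "y = ?h (?h y)" by (simp add: vec_eq_iff)
    ultimately show "y \<in> ?h ` cbox a b" by blast
  qed
  have "(\<Prod>i\<in>UNIV. b $ i - a $ i) = (\<Prod>i\<in>UNIV. b $ ?\<tau> i - a $ ?\<tau> i)"
    using prod.permute[of ?\<tau> UNIV "\<lambda>i. b $ i - a $ i"] by (simp add: permutes_swap_id o_def)
  moreover have "cbox (?h a) (?h b) = {} \<longleftrightarrow> cbox a b = {}"
    by (simp flip: box)
  ultimately show ?thesis
    by (simp add: box content_cbox_if_cart)
qed

lemma measure_shear_cbox: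
  fixes a b :: "real^'n"
  assumes "m \<noteq> n"
  shows "measure lebesgue ((\<lambda>x. \<chi> i. if i = m then x $ m + x $ n else x $ i) ` cbox a b)
    = measure lebesgue (cbox a b)"
proof (cases "cbox a b = {}")
  case False
  let ?h = "\<lambda>x::real^'n. \<chi> i. if i = m then x $ m + x $ n else x $ i"
  have box: "cbox a b = (+) a ` cbox 0 (b - a)"
    using cbox_translation[of a 0 "b - a"] by simp
  have "?h (a + x) = ?h a + ?h x" for x by (simp add: vec_eq_iff)
  then have "?h ` cbox a b = (+) (?h a) ` ?h ` cbox 0 (b - a)"
    by (simp only: box image_image)
  then have "measure lebesgue (?h ` cbox a b) = measure lebesgue (?h ` cbox 0 (b - a))"
    by (simp only: measure_translation)
  also have "\<dots> = measure lebesgue (cbox 0 (b - a))"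
    using False assms by (intro measure_shear_interval) (auto simp: interval_ne_empty_cart)
  also have "\<dots> = measure lebesgue (cbox a b)"
    by (simp only: box measure_translation)
  finally show ?thesis .
qed simp

lemma abs_det_matrix_coordinate_swap:
  "\<bar>det (matrix (\<lambda>x::real^'n. \<chi> i. x $ Transposition.transpose m n i))\<bar> = 1"
proof -
  let ?h = "\<lambda>x::real^'n. \<chi> i. x $ Transposition.transpose m n i"
  have lin: "linear ?h" by (rule linearI) (simp_all add: vec_eq_iff)
  have "?h \<circ> ?h = id" by (simp add: fun_eq_iff vec_eq_iff)
  then have "matrix ?h ** matrix ?h = mat 1"
    using matrix_compose[OF lin lin] by (simp add: matrix_id_mat_1)
  from arg_cong[OF this, of det] have "(det (matrix ?h))\<^sup>2 = 1"
    by (simp add: det_mul power2_eq_square)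
  then show ?thesis
    by (auto simp: power2_eq_1_iff)
qed

lemma det_matrix_shear:
  assumes "m \<noteq> n"
  shows "det (matrix (\<lambda>x::real^'n. \<chi> i. if i = m then x $ m + x $ n else x $ i)) = 1"
proof -
  have "matrix (\<lambda>x::real^'n. \<chi> i. if i = m then x $ m + x $ n else x $ i)
      = (\<chi> k. if k = m then row m (mat 1) + 1 *s row n (mat 1) else row k (mat 1))"
    by (simp add: matrix_def vec_eq_iff row_def mat_def axis_def)
  then show ?thesis
    using det_row_operation[OF assms, of "mat 1 :: real^'n^'n" 1] by simp
qed

lemma measure_linear_image_if_cbox:
  fixes f :: "real^'n \<Rightarrow> real^'n"
  assumes "linear f" and "\<bar>det (matrix f)\<bar> = 1"
    and "\<And>a b. measure lebesgue (f ` cbox a b) = measure lebesgue (cbox a b)"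
    and "S \<in> lmeasurable"
  shows "f ` S \<in> lmeasurable \<and> measure lebesgue (f ` S) = \<bar>det (matrix f)\<bar> * measure lebesgue S"
  using measure_linear_sufficient[OF assms(1,4), of 1] assms(2,3) by simp

text \<open>The library's \<open>measure_linear_image\<close> is stated for index types of sort \<open>wellorder\<close> only,
  so we rerun its induction over elementary maps for an arbitrary finite index type.\<close>

proposition measure_linear_image_cart:
  fixes f :: "real^'n \<Rightarrow> real^'n"
  assumes "linear f" and "S \<in> lmeasurable"
  shows "f ` S \<in> lmeasurable \<and> measure lebesgue (f ` S) = \<bar>det (matrix f)\<bar> * measure lebesgue S"
proof -
  let ?P = "\<lambda>f::real^'n \<Rightarrow> real^'n. \<forall>S\<in>lmeasurable.
    f ` S \<in> lmeasurable \<and> measure lebesgue (f ` S) = \<bar>det (matrix f)\<bar> * measure lebesgue S"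
  have "?P f"
  proof (rule induct_linear_elementary[OF \<open>linear f\<close>])
    fix f g :: "real^'n \<Rightarrow> real^'n"
    assume "linear f" "linear g" and f: "?P f" and g: "?P g"
    show "?P (f \<circ> g)"
    proof
      fix S :: "(real^'n) set" assume "S \<in> lmeasurable"
      with g have gS: "g ` S \<in> lmeasurable"
        and mg: "measure lebesgue (g ` S) = \<bar>det (matrix g)\<bar> * measure lebesgue S"
        by auto
      with f have "f ` g ` S \<in> lmeasurable"
        and mf: "measure lebesgue (f ` g ` S) = \<bar>det (matrix f)\<bar> * measure lebesgue (g ` S)"
        by auto
      moreover have "\<bar>det (matrix (f \<circ> g))\<bar> = \<bar>det (matrix f)\<bar> * \<bar>det (matrix g)\<bar>"
        by (simp add: matrix_compose[OF \<open>linear g\<close> \<open>linear f\<close>] det_mul abs_mult)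
      ultimately show "(f \<circ> g) ` S \<in> lmeasurable \<and>
          measure lebesgue ((f \<circ> g) ` S) = \<bar>det (matrix (f \<circ> g))\<bar> * measure lebesgue S"
        by (simp only: image_comp[symmetric] mf mg mult.assoc)
    qed
  next
    fix f :: "real^'n \<Rightarrow> real^'n" and i
    assume f: "linear f" and zero: "\<And>x. f x $ i = 0"
    have "\<not> inj f"
    proof
      assume "inj f"
      then have "surj f" using f linear_injective_imp_surjective by blast
      then obtain x where "f x = axis i 1" by (metis surjE)
      with zero[of x] show False by simp
    qed
    then have "det (matrix f) = 0" and "negligible (f ` S)" for S
      using f det_nz_iff_inj negligible_linear_singular_image by blast+
    then show "?P f" by (simp add: negligible_iff_measure)
  next
    fix c :: "'n \<Rightarrow> real"
    have "matrix (\<lambda>x::real^'n. \<chi> i. c i * x $ i) = diag_mat c"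
      by (simp add: matrix_def diag_mat_def axis_def vec_eq_iff)
    then show "?P (\<lambda>x. \<chi> i. c i * x $ i)"
      by (simp add: measurable_stretch measure_stretch det_diag_mat)
  next
    fix m n :: 'n
    let ?h = "\<lambda>x::real^'n. \<chi> i. x $ Transposition.transpose m n i"
    have lin: "linear ?h" by (rule linearI) (simp_all add: vec_eq_iff)
    show "?P ?h"
      using measure_linear_image_if_cbox[OF lin] abs_det_matrix_coordinate_swap
        measure_coordinate_swap_cbox
      by blast
  next
    fix m n :: 'n
    assume "m \<noteq> n"
    let ?h = "\<lambda>x::real^'n. \<chi> i. if i = m then x $ m + x $ n else x $ i"
    have lin: "linear ?h" by (rule linearI) (simp_all add: vec_eq_iff algebra_simps)
    show "?P ?h"
      using measure_linear_image_if_cbox[OF lin] det_matrix_shear[OF \<open>m \<noteq> n\<close>]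
        measure_shear_cbox[OF \<open>m \<noteq> n\<close>]
      by simp
  qed
  with assms(2) show ?thesis by blast
qed

lemma
  fixes A :: "real^'n^'n"
  assumes "det A \<noteq> 0"
  shows matrix_inv_left: "matrix_inv A ** A = mat 1"
    and matrix_inv_right: "A ** matrix_inv A = mat 1"
proof -
  have "\<exists>A'. A ** A' = mat 1 \<and> A' ** A = mat 1"
    using assms invertible_det_nz unfolding invertible_def by blast
  then have "A ** matrix_inv A = mat 1 \<and> matrix_inv A ** A = mat 1"
    unfolding matrix_inv_def by (rule someI_ex)
  then show "matrix_inv A ** A = mat 1" "A ** matrix_inv A = mat 1" by auto
qed

lemma det_matrix_inv:
  fixes A :: "real^'n^'n"
  assumes "det A \<noteq> 0"
  shows "det (matrix_inv A) = 1 / det A"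
  using arg_cong[OF matrix_inv_left[OF assms], of det] assms
  by (simp add: det_mul field_simps)

lemma affine_matrix_inv_cancel:
  fixes A :: "real^'n^'n"
  assumes "det A \<noteq> 0"
  shows "matrix_inv A *v (A *v x + t) + - (matrix_inv A *v t) = x"
    and "A *v (matrix_inv A *v y + - (matrix_inv A *v t)) + t = y"
  using assms
  by (simp_all add: matrix_vector_right_distrib matrix_vector_mult_diff_distrib
      matrix_vector_mul_assoc matrix_inv_left matrix_inv_right)

lemma affine_image_lmeasurable:
  fixes A :: "real^'n^'n"
  assumes "S \<in> lmeasurable"
  shows "(\<lambda>x. A *v x + t) ` S \<in> lmeasurable"
    and "measure lebesgue ((\<lambda>x. A *v x + t) ` S) = \<bar>det A\<bar> * measure lebesgue S"
proof -
  have eq: "(\<lambda>x. A *v x + t) ` S = (+) t ` (*v) A ` S"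
    by (simp add: image_image add.commute)
  show "(\<lambda>x. A *v x + t) ` S \<in> lmeasurable"
    unfolding eq using measure_linear_image_cart[OF _ assms, of "(*v) A"]
    by (intro measurable_translation) simp
  show "measure lebesgue ((\<lambda>x. A *v x + t) ` S) = \<bar>det A\<bar> * measure lebesgue S"
    unfolding eq measure_translation using measure_linear_image_cart[OF _ assms, of "(*v) A"]
    by simp
qed

lemma affine_image_sets_lebesgue:
  fixes A :: "real^'n^'n"
  assumes A: "\<bar>det A\<bar> = 1" and S: "S \<in> sets lebesgue"
  shows "(\<lambda>x. A *v x + t) ` S \<in> sets lebesgue"
    and "emeasure lebesgue ((\<lambda>x. A *v x + t) ` S) = emeasure lebesgue S"
proof -
  let ?f = "\<lambda>x. A *v x + t"
  show fS: "?f ` S \<in> sets lebesgue"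
  proof (rule sets_lebesgue_continuous_image[OF S])
    show "continuous_on UNIV ?f"
      by (intro continuous_intros linear_continuous_on matrix_vector_mul_bounded_linear)
    show "negligible (?f ` T)" if "negligible T" for T
      using that A affine_image_lmeasurable[of T A t] by (simp add: negligible_iff_measure)
  qed simp
  show "emeasure lebesgue (?f ` S) = emeasure lebesgue S"
  proof (cases "S \<in> lmeasurable")
    case True
    then show ?thesis
      using A affine_image_lmeasurable[OF True, of A t] by (simp add: emeasure_eq_measure2)
  next
    case False
    let ?B = "matrix_inv A"
    have "det A \<noteq> 0" using A by auto
    then have "S = (\<lambda>y. ?B *v y + - (?B *v t)) ` ?f ` S"
      by (simp only: image_image affine_matrix_inv_cancel(1)[OF \<open>det A \<noteq> 0\<close>] image_ident)
    have "?f ` S \<notin> lmeasurable"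
    proof
      assume "?f ` S \<in> lmeasurable"
      then have "(\<lambda>y. ?B *v y + - (?B *v t)) ` ?f ` S \<in> lmeasurable"
        by (rule affine_image_lmeasurable(1))
      with False \<open>S = _\<close> show False by simp
    qed
    have inf: "emeasure lebesgue X = top" if "X \<in> sets lebesgue" "X \<notin> lmeasurable" for X
    proof -
      have "\<not> emeasure lebesgue X < \<infinity>" using that fmeasurableI[of X lebesgue] by blast
      then show ?thesis by (simp only: infinity_ennreal_def top.not_eq_extremum[symmetric] not_not)
    qed
    show ?thesis
      by (simp only: inf[OF S False] inf[OF fS \<open>?f ` S \<notin> lmeasurable\<close>])
  qed
qed

lemma lebesgue_affine_measure_preserving:
  fixes A :: "real^'n^'n"
  assumes A: "\<bar>det A\<bar> = 1"
  shows "(\<lambda>x. A *v x + t) \<in> lebesgue \<rightarrow>\<^sub>M lebesgue"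
    and "distr lebesgue lebesgue (\<lambda>x. A *v x + t) = lebesgue"
proof -
  let ?B = "matrix_inv A"
  have "det A \<noteq> 0" using A by auto
  then have B: "\<bar>det ?B\<bar> = 1" using A by (simp add: det_matrix_inv)
  let ?f = "\<lambda>x. A *v x + t" and ?g = "\<lambda>y. ?B *v y + - (?B *v t)"
  note gf = affine_matrix_inv_cancel(1)[OF \<open>det A \<noteq> 0\<close>]
    and fg = affine_matrix_inv_cancel(2)[OF \<open>det A \<noteq> 0\<close>]
  have preimage: "?f -` X \<inter> space lebesgue = ?g ` X" for X
  proof (intro set_eqI iffI)
    fix x assume "x \<in> ?f -` X \<inter> space lebesgue"
    then show "x \<in> ?g ` X" using gf[of x] by (metis image_eqI vimageE IntD1)
  next
    fix x assume "x \<in> ?g ` X"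
    then show "x \<in> ?f -` X \<inter> space lebesgue" using fg by auto
  qed
  show meas: "?f \<in> lebesgue \<rightarrow>\<^sub>M lebesgue"
    by (rule measurableI) (simp, simp only: preimage affine_image_sets_lebesgue(1)[OF B])
  show "distr lebesgue lebesgue ?f = lebesgue"
  proof (rule measure_eqI)
    fix X assume "X \<in> sets (distr lebesgue lebesgue ?f)"
    then show "emeasure (distr lebesgue lebesgue ?f) X = emeasure lebesgue X"
      by (simp only: sets_distr emeasure_distr[OF meas] preimage affine_image_sets_lebesgue(2)[OF B])
  qed simp
qed

lemma
  fixes A :: "real^'n^'n" and f :: "real^'n \<Rightarrow> 'b::{banach, second_countable_topology}"
  assumes "\<bar>det A\<bar> = 1" and "f \<in> borel_measurable lebesgue"
  shows integral_affine_substitution: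
      "(\<integral>x. f (A *v x + t) \<partial>lebesgue) = integral\<^sup>L lebesgue f"
    and integrable_affine_substitution_iff:
      "integrable lebesgue (\<lambda>x. f (A *v x + t)) \<longleftrightarrow> integrable lebesgue f"
  using integral_distr[OF lebesgue_affine_measure_preserving(1)[OF assms(1)] assms(2)]
    integrable_distr_eq[OF lebesgue_affine_measure_preserving(1)[OF assms(1)] assms(2)]
  by (simp_all add: lebesgue_affine_measure_preserving(2)[OF assms(1)])

lemma
  fixes f :: "real^'n \<Rightarrow> 'b::{banach, second_countable_topology}"
  assumes "f \<in> borel_measurable lebesgue"
  shows integral_translate: "(\<integral>x. f (x + t) \<partial>lebesgue) = integral\<^sup>L lebesgue f"
    and integrable_translate_iff: "integrable lebesgue (\<lambda>x. f (x + t)) \<longleftrightarrow> integrable lebesgue f"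
  using integral_affine_substitution[of "mat 1" f t] integrable_affine_substitution_iff[of "mat 1" f t]
    assms by simp_all

lemma continuous_imp_borel_measurable_lebesgue:
  fixes f :: "'a::euclidean_space \<Rightarrow> 'b::euclidean_space"
  assumes "continuous_on UNIV f"
  shows "f \<in> borel_measurable lebesgue"
  using borel_measurable_continuous_onI[OF assms]
  by (intro measurable_completion) (simp cong: measurable_cong_sets)

section \<open>Moments of a density\<close>

definition has_second_moments :: "(real^'n \<Rightarrow> real) \<Rightarrow> bool" where
  "has_second_moments g \<longleftrightarrow> integrable lebesgue g \<and> integrable lebesgue (\<lambda>z. (norm z)\<^sup>2 * g z)"

definition first_moment :: "(real^'n \<Rightarrow> real) \<Rightarrow> real^'n" where
  "first_moment g = (\<integral>z. g z *\<^sub>R z \<partial>lebesgue)"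

definition second_moment :: "(real^'n \<Rightarrow> real) \<Rightarrow> real^'n^'n" where
  "second_moment g = (\<chi> i j. \<integral>z. z $ i * z $ j * g z \<partial>lebesgue)"

lemma
  fixes g :: "real^'n \<Rightarrow> real"
  assumes "has_second_moments g"
  shows integrable_first_moment: "integrable lebesgue (\<lambda>z. g z *\<^sub>R z)"
    and integrable_second_moment: "integrable lebesgue (\<lambda>z. z $ i * z $ j * g z)"
proof -
  have g: "integrable lebesgue g" and g2: "integrable lebesgue (\<lambda>z. (norm z)\<^sup>2 * g z)"
    using assms by (simp_all add: has_second_moments_def)
  have gm: "g \<in> borel_measurable lebesgue" using g by (rule borel_measurable_integrable)
  show "integrable lebesgue (\<lambda>z. g z *\<^sub>R z)"
  proof (rule Bochner_Integration.integrable_bound)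
    show "integrable lebesgue (\<lambda>z. norm (g z) + norm ((norm z)\<^sup>2 * g z))"
      using g g2 by simp
    show "(\<lambda>z. g z *\<^sub>R z) \<in> borel_measurable lebesgue"
      by (intro borel_measurable_scaleR continuous_imp_borel_measurable_lebesgue continuous_intros gm)
    show "AE z in lebesgue. norm (g z *\<^sub>R z) \<le> norm (norm (g z) + norm ((norm z)\<^sup>2 * g z))"
    proof (intro AE_I2)
      fix z :: "real^'n"
      have "0 \<le> (norm z - 1)\<^sup>2" by simp
      then have "norm z \<le> 1 + (norm z)\<^sup>2"
        using norm_ge_zero[of z] unfolding power2_eq_square by argo
      then have "norm z * \<bar>g z\<bar> \<le> (1 + (norm z)\<^sup>2) * \<bar>g z\<bar>"
        by (rule mult_right_mono) simp
      then show "norm (g z *\<^sub>R z) \<le> norm (norm (g z) + norm ((norm z)\<^sup>2 * g z))"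
        by (simp add: abs_mult algebra_simps)
    qed
  qed
  show "integrable lebesgue (\<lambda>z. z $ i * z $ j * g z)"
  proof (rule Bochner_Integration.integrable_bound[OF g2])
    show "(\<lambda>z. z $ i * z $ j * g z) \<in> borel_measurable lebesgue"
      by (intro borel_measurable_times continuous_imp_borel_measurable_lebesgue continuous_intros gm)
    show "AE z in lebesgue. norm (z $ i * z $ j * g z) \<le> norm ((norm z)\<^sup>2 * g z)"
    proof (intro AE_I2)
      fix z :: "real^'n"
      have "\<bar>z $ i\<bar> * \<bar>z $ j\<bar> \<le> norm z * norm z"
        by (intro mult_mono component_le_norm_cart) simp_all
      then show "norm (z $ i * z $ j * g z) \<le> norm ((norm z)\<^sup>2 * g z)"
        by (simp add: abs_mult power2_eq_square mult_right_mono)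
    qed
  qed
qed

lemma has_second_moments_translate:
  fixes g :: "real^'n \<Rightarrow> real"
  assumes "has_second_moments g"
  shows "has_second_moments (\<lambda>z. g (z + c))"
proof -
  have g: "integrable lebesgue g" and g2: "integrable lebesgue (\<lambda>z. (norm z)\<^sup>2 * g z)"
    using assms by (simp_all add: has_second_moments_def)
  have gm: "g \<in> borel_measurable lebesgue" using g by (rule borel_measurable_integrable)
  let ?F = "\<lambda>y. (norm (y - c))\<^sup>2 * g y"
  have Fm: "?F \<in> borel_measurable lebesgue"
    by (intro borel_measurable_times continuous_imp_borel_measurable_lebesgue continuous_intros gm)
  have "integrable lebesgue ?F"
  proof (rule Bochner_Integration.integrable_bound[OF _ Fm])
    show "integrable lebesgue (\<lambda>y. 2 * norm ((norm y)\<^sup>2 * g y) + 2 * (norm c)\<^sup>2 * norm (g y))"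
      using g g2 by simp
    show "AE y in lebesgue. norm (?F y) \<le> norm (2 * norm ((norm y)\<^sup>2 * g y) + 2 * (norm c)\<^sup>2 * norm (g y))"
    proof (intro AE_I2)
      fix y :: "real^'n"
      have "norm (y - c) \<le> norm y + norm c" by (rule norm_triangle_ineq4)
      then have "(norm (y - c))\<^sup>2 \<le> (norm y + norm c)\<^sup>2" by (simp add: power_mono)
      also have "\<dots> \<le> 2 * (norm y)\<^sup>2 + 2 * (norm c)\<^sup>2"
        using sum_squares_bound[of "norm y" "norm c"] by (simp add: power2_sum)
      finally have "(norm (y - c))\<^sup>2 * \<bar>g y\<bar> \<le> (2 * (norm y)\<^sup>2 + 2 * (norm c)\<^sup>2) * \<bar>g y\<bar>"
        by (rule mult_right_mono) simp
      then show "norm (?F y) \<le> norm (2 * norm ((norm y)\<^sup>2 * g y) + 2 * (norm c)\<^sup>2 * norm (g y))"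
        by (simp add: abs_mult algebra_simps)
    qed
  qed
  then have "integrable lebesgue (\<lambda>z. ?F (z + c))"
    using integrable_translate_iff[OF Fm] by blast
  moreover have "integrable lebesgue (\<lambda>z. g (z + c))"
    using integrable_translate_iff[OF gm] g by blast
  ultimately show ?thesis by (simp add: has_second_moments_def)
qed

lemma first_moment_translate:
  fixes g :: "real^'n \<Rightarrow> real"
  assumes "has_second_moments g"
  shows "first_moment (\<lambda>z. g (z + c)) = first_moment g - integral\<^sup>L lebesgue g *\<^sub>R c"
proof -
  have g: "integrable lebesgue g" using assms by (simp add: has_second_moments_def)
  let ?G = "\<lambda>y. g y *\<^sub>R y - g y *\<^sub>R c"
  have G: "integrable lebesgue ?G"
    using g integrable_first_moment[OF assms] by simp
  have "first_moment (\<lambda>z. g (z + c)) = (\<integral>z. ?G (z + c) \<partial>lebesgue)"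
    by (simp add: first_moment_def algebra_simps)
  also have "\<dots> = integral\<^sup>L lebesgue ?G"
    using G by (intro integral_translate borel_measurable_integrable)
  also have "\<dots> = first_moment g - integral\<^sup>L lebesgue g *\<^sub>R c"
    using G g integrable_first_moment[OF assms] by (simp add: first_moment_def)
  finally show ?thesis .
qed

lemma integral_quadratic_moments:
  fixes g :: "real^'n \<Rightarrow> real" and M :: "real^'n^'n"
  assumes "has_second_moments g"
  shows "(\<integral>y. (y \<bullet> (M *v y) + w \<bullet> y + k) * g y \<partial>lebesgue)
    = trace (M ** second_moment g) + w \<bullet> first_moment g + k * integral\<^sup>L lebesgue g"
proof -
  have g: "integrable lebesgue g" using assms by (simp add: has_second_moments_def)
  note g1 = integrable_first_moment[OF assms] and g2 = integrable_second_moment[OF assms]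
  let ?Q = "\<lambda>y. \<Sum>i\<in>UNIV. \<Sum>j\<in>UNIV. M $ i $ j * (y $ i * y $ j * g y)"
  have "(y \<bullet> (M *v y) + w \<bullet> y + k) * g y = ?Q y + w \<bullet> (g y *\<^sub>R y) + k * g y" for y
    by (simp add: inner_vec_def matrix_vector_mult_def sum_distrib_left sum_distrib_right
        algebra_simps)
  then have "(\<integral>y. (y \<bullet> (M *v y) + w \<bullet> y + k) * g y \<partial>lebesgue)
      = (\<integral>y. ?Q y + w \<bullet> (g y *\<^sub>R y) + k * g y \<partial>lebesgue)"
    by (simp only:)
  also have "\<dots> = integral\<^sup>L lebesgue ?Q + (\<integral>y. w \<bullet> (g y *\<^sub>R y) \<partial>lebesgue)
      + k * integral\<^sup>L lebesgue g"
  proof -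
    have Q: "integrable lebesgue ?Q" using g2 by simp
    have W: "integrable lebesgue (\<lambda>y. w \<bullet> (g y *\<^sub>R y))"
      by (intro integrable_inner_right) (rule g1)
    have K: "integrable lebesgue (\<lambda>y. k * g y)" using g by simp
    show ?thesis
      by (simp only: Bochner_Integration.integral_add[OF Bochner_Integration.integrable_add[OF Q W] K]
          Bochner_Integration.integral_add[OF Q W] integral_mult_right_zero)
  qed
  also have "integral\<^sup>L lebesgue ?Q = (\<Sum>i\<in>UNIV. \<Sum>j\<in>UNIV. M $ i $ j * second_moment g $ i $ j)"
    using g2 by (simp add: second_moment_def)
  also have "\<dots> = trace (M ** second_moment g)"
  proof -
    have "second_moment g $ j $ i = second_moment g $ i $ j" for i j
      by (simp add: second_moment_def mult_ac)
    then show ?thesis by (simp add: trace_def matrix_matrix_mult_def)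
  qed
  also have "(\<integral>y. w \<bullet> (g y *\<^sub>R y) \<partial>lebesgue) = w \<bullet> first_moment g"
    using g1 by (simp only: integral_inner_right first_moment_def)
  finally show ?thesis .
qed

lemma
  fixes g :: "real^'n \<Rightarrow> real"
  assumes "has_second_moments g"
  shows integrable_quadratic_form_moment: "integrable lebesgue (\<lambda>y. (x \<bullet> y)\<^sup>2 * g y)"
    and inner_second_moment: "x \<bullet> (second_moment g *v x) = (\<integral>y. (x \<bullet> y)\<^sup>2 * g y \<partial>lebesgue)"
proof -
  note g2 = integrable_second_moment[OF assms]
  have expand: "(x \<bullet> y)\<^sup>2 * g y = (\<Sum>i\<in>UNIV. \<Sum>j\<in>UNIV. (x $ i * x $ j) * (y $ i * y $ j * g y))"
    for y :: "real^'n"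
    unfolding inner_vec_def power2_eq_square sum_product
    by (simp add: sum_distrib_left sum_distrib_right mult_ac)
  show "integrable lebesgue (\<lambda>y. (x \<bullet> y)\<^sup>2 * g y)"
    using g2 by (simp only: expand) simp
  have "x \<bullet> (second_moment g *v x) = (\<Sum>i\<in>UNIV. \<Sum>j\<in>UNIV. (x $ i * x $ j) * second_moment g $ i $ j)"
    by (simp add: inner_vec_def matrix_vector_mult_def sum_distrib_left mult_ac)
  also have "\<dots> = (\<integral>y. (x \<bullet> y)\<^sup>2 * g y \<partial>lebesgue)"
    using g2 by (simp only: expand) (simp add: second_moment_def)
  finally show "x \<bullet> (second_moment g *v x) = (\<integral>y. (x \<bullet> y)\<^sup>2 * g y \<partial>lebesgue)" .
qed

lemma second_moment_pos_def:
  fixes g :: "real^'n \<Rightarrow> real"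
  assumes g: "has_second_moments g" and nonneg: "\<And>z. 0 \<le> g z"
    and nonzero: "integral\<^sup>L lebesgue g \<noteq> 0"
  shows "pos_def (second_moment g)"
  unfolding pos_def_def
proof (intro conjI allI impI)
  show "transpose (second_moment g) = second_moment g"
    by (simp add: second_moment_def transpose_def vec_eq_iff mult_ac)
  fix x :: "real^'n"
  assume "x \<noteq> 0"
  let ?q = "\<lambda>y. (x \<bullet> y)\<^sup>2 * g y"
  have q: "integrable lebesgue ?q"
    by (rule integrable_quadratic_form_moment[OF g])
  have q_nonneg: "AE y in lebesgue. 0 \<le> ?q y" using nonneg by simp
  have "0 < integral\<^sup>L lebesgue ?q"
  proof (rule ccontr)
    assume "\<not> 0 < integral\<^sup>L lebesgue ?q"
    then have "integral\<^sup>L lebesgue ?q = 0"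
      using integral_nonneg_AE[OF q_nonneg] by linarith
    then have "AE y in lebesgue. ?q y = 0"
      using integral_nonneg_eq_0_iff_AE[OF q q_nonneg] by simp
    \<comment> \<open>Off the null hyperplane \<open>x \<bullet> y = 0\<close> this forces \<open>g = 0\<close>.\<close>
    moreover have "{y. x \<bullet> y = 0} \<in> null_sets lebesgue"
      using negligible_hyperplane[of x 0] \<open>x \<noteq> 0\<close> by (simp add: negligible_iff_null_sets)
    then have "AE y in lebesgue. x \<bullet> y \<noteq> 0"
      using AE_not_in by force
    ultimately have "AE y in lebesgue. g y = 0" by eventually_elim simp
    then have "integral\<^sup>L lebesgue g = 0" by (rule integral_eq_zero_AE)
    with nonzero show False by simp
  qed
  then show "0 < x \<bullet> (second_moment g *v x)"
    by (simp add: inner_second_moment[OF g])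
qed

lemma inner_affine_quadratic_form:
  fixes A V :: "real^'n^'n"
  assumes V: "transpose V = V"
  shows "(A *v y + e) \<bullet> (V *v (A *v y + e))
    = y \<bullet> ((transpose A ** V ** A) *v y) + (2 *\<^sub>R (transpose A *v (V *v e))) \<bullet> y + e \<bullet> (V *v e)"
proof -
  have "e \<bullet> (V *v (A *v y)) = (A *v y) \<bullet> (V *v e)"
    using symmetric_matrix_inner_commute[OF V, of e "A *v y"] by (simp add: inner_commute)
  moreover have "(A *v y) \<bullet> (V *v e) = (transpose A *v (V *v e)) \<bullet> y"
    by (metis dot_lmul_matrix inner_commute transpose_matrix_vector)
  ultimately show ?thesis
    by (simp add: inner_congruence matrix_vector_right_distrib inner_add_left inner_add_right)
qed

lemma integral_quadratic_cost_affine: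
  fixes A V :: "real^'n^'n" and f :: "real^'n \<Rightarrow> real"
  assumes V: "transpose V = V" and A: "\<bar>det A\<bar> = 1" and f: "has_second_moments f"
    and centred: "first_moment (\<lambda>z. f (z + c)) = 0"
  shows "(\<integral>z. (V0 + (z - d) \<bullet> (V *v (z - d))) * f (matrix_inv A *v z + b) \<partial>lebesgue)
    = V0 * integral\<^sup>L lebesgue f + trace (transpose A ** V ** A ** second_moment (\<lambda>z. f (z + c)))
      + integral\<^sup>L lebesgue f * ((A *v (c - b) - d) \<bullet> (V *v (A *v (c - b) - d)))"
proof -
  define e where "e = A *v (c - b) - d"
  let ?F = "\<lambda>z. (V0 + (z - d) \<bullet> (V *v (z - d))) * f (matrix_inv A *v z + b)"
  have fm: "f \<in> borel_measurable lebesgue"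
    using f by (simp add: has_second_moments_def borel_measurable_integrable)
  have "det A \<noteq> 0" using A by auto
  then have "\<bar>det (matrix_inv A)\<bar> = 1" using A by (simp add: det_matrix_inv)
  from measurable_compose[OF lebesgue_affine_measure_preserving(1)[OF this] fm]
  have "(\<lambda>z. f (matrix_inv A *v z + b)) \<in> borel_measurable lebesgue" by (simp add: o_def)
  moreover have "(\<lambda>z. V0 + (z - d) \<bullet> (V *v (z - d))) \<in> borel_measurable lebesgue"
    by (intro continuous_imp_borel_measurable_lebesgue continuous_intros
        bounded_linear.continuous_on[OF matrix_vector_mul_bounded_linear])
  ultimately have "?F \<in> borel_measurable lebesgue" by (intro borel_measurable_times)
  then have "integral\<^sup>L lebesgue ?F = (\<integral>y. ?F (A *v y + A *v (c - b)) \<partial>lebesgue)"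
    by (rule integral_affine_substitution[OF A, symmetric])
  also have "\<dots> = (\<integral>y. (y \<bullet> ((transpose A ** V ** A) *v y) + (2 *\<^sub>R (transpose A *v (V *v e))) \<bullet> y
      + (V0 + e \<bullet> (V *v e))) * f (y + c) \<partial>lebesgue)"
  proof (intro Bochner_Integration.integral_cong refl)
    fix y :: "real^'n"
    have "A *v y + A *v (c - b) = A *v (y + (c - b))"
      by (simp add: matrix_vector_right_distrib)
    then have arg: "matrix_inv A *v (A *v y + A *v (c - b)) + b = y + c"
      using \<open>det A \<noteq> 0\<close> by (simp add: matrix_vector_mul_assoc matrix_inv_left)
    have shift: "A *v y + A *v (c - b) - d = A *v y + e"
      by (simp add: e_def)
    show "?F (A *v y + A *v (c - b)) = (y \<bullet> ((transpose A ** V ** A) *v y)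
        + (2 *\<^sub>R (transpose A *v (V *v e))) \<bullet> y + (V0 + e \<bullet> (V *v e))) * f (y + c)"
      unfolding arg shift inner_affine_quadratic_form[OF V] by (simp add: add_ac)
  qed
  also have "\<dots> = trace (transpose A ** V ** A ** second_moment (\<lambda>z. f (z + c)))
      + (V0 + e \<bullet> (V *v e)) * integral\<^sup>L lebesgue f"
    using integral_quadratic_moments[OF has_second_moments_translate[OF f],
        of "transpose A ** V ** A" "2 *\<^sub>R (transpose A *v (V *v e))" "V0 + e \<bullet> (V *v e)"]
    by (simp only: centred integral_translate[OF fm] inner_zero_right add_0_right)
  finally show ?thesis
    unfolding e_def[symmetric] by (simp add: algebra_simps)
qed

theorem Inf_quadratic_cost_det_one:
  fixes V H :: "real^'n^'n" and f :: "real^'n \<Rightarrow> real" and N :: real and c :: "real^'n"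
  assumes V: "pos_def V" and f: "has_second_moments f" and nonneg: "\<And>z. 0 \<le> f z"
    and nonzero: "integral\<^sup>L lebesgue f \<noteq> 0"
  defines "N \<equiv> integral\<^sup>L lebesgue f"
    and "c \<equiv> (1 / N) *\<^sub>R first_moment f"
    and "H \<equiv> second_moment (\<lambda>z. f (z + c))"
  shows "Inf {\<integral>z. (V0 + (z - d) \<bullet> (V *v (z - d))) * f (matrix_inv A *v z + b) \<partial>lebesgue
              | b A. det A = 1}
    = N * V0 + real CARD('n) * (det V * det H) powr (1 / real CARD('n))"
proof -
  let ?J = "\<lambda>b A. \<integral>z. (V0 + (z - d) \<bullet> (V *v (z - d))) * f (matrix_inv A *v z + b) \<partial>lebesgue"
  let ?opt = "N * V0 + real CARD('n) * (det V * det H) powr (1 / real CARD('n))"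
  have fm: "f \<in> borel_measurable lebesgue"
    using f by (simp add: has_second_moments_def borel_measurable_integrable)
  have N: "0 \<le> N" "N \<noteq> 0"
    using nonneg nonzero by (simp_all add: N_def)
  have centred: "first_moment (\<lambda>z. f (z + c)) = 0"
    using N by (simp add: first_moment_translate[OF f] c_def N_def)
  have H: "pos_def H"
    unfolding H_def using nonneg N
    by (intro second_moment_pos_def has_second_moments_translate f)
      (simp_all add: integral_translate[OF fm] N_def)
  have cost: "?J b A = N * V0 + trace (transpose A ** V ** A ** H)
      + N * ((A *v (c - b) - d) \<bullet> (V *v (A *v (c - b) - d)))" if "det A = 1" for A b
    using integral_quadratic_cost_affine[OF _ _ f centred] V that
    by (simp add: pos_def_def H_def N_def mult.commute)
  show ?thesis
  proof (rule cInf_eq_minimum)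
    obtain A where A: "det A = 1"
      and "trace (transpose A ** V ** A ** H) = real CARD('n) * (det V * det H) powr (1 / real CARD('n))"
      using trace_congruence_attains[OF V H] by blast
    moreover have "A *v (c - (c - matrix_inv A *v d)) - d = 0"
      using A by (simp add: matrix_vector_mul_assoc matrix_inv_right)
    ultimately have "?opt = ?J (c - matrix_inv A *v d) A"
      by (simp add: cost)
    with A show "?opt \<in> {?J b A | b A. det A = 1}" by blast
  next
    fix x assume "x \<in> {?J b A | b A. det A = 1}"
    then obtain A b where A: "det A = 1" and x: "x = ?J b A" by blast
    have "real CARD('n) * (det V * det H) powr (1 / real CARD('n)) \<le> trace (transpose A ** V ** A ** H)"
      using trace_congruence_ge[OF pos_def_imp_pos_semidef[OF V] pos_def_imp_pos_semidef[OF H] A] .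
    moreover have "0 \<le> N * ((A *v (c - b) - d) \<bullet> (V *v (A *v (c - b) - d)))"
      using N pos_def_imp_pos_semidef[OF V] by (simp add: pos_semidef_def)
    ultimately show "?opt \<le> x"
      by (simp add: x cost[OF A])
  qed
qed

theorem mainTheorem2:
  fixes n :: nat
    and V :: "real^'m^'m" and d :: "real^'m" and V0 :: real
    and f0 :: "real^'m \<Rightarrow> real"
  assumes dim: "CARD('m) = 2 * n" and n1: "n \<ge> 1"
    and Vsym: "transpose V = V"
    and Vpos: "\<forall>x. x \<noteq> 0 \<longrightarrow> x \<bullet> (V *v x) > 0"
    and f0_meas: "f0 \<in> borel_measurable lebesgue"
    and f0_nonneg: "\<forall>z. f0 z \<ge> 0"
    and f0_nz: "\<not> (AE z in lebesgue. f0 z = 0)"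
    and f0_int: "integrable lebesgue f0"
    and f0_mom2: "integrable lebesgue (\<lambda>z. (norm z)^2 * f0 z)"
  shows
    "(let \<E> = (\<lambda>z. V0 + (z - d) \<bullet> (V *v (z - d)));
          N = integral\<^sup>L lebesgue f0;
          c = (1 / N) *\<^sub>R integral\<^sup>L lebesgue (\<lambda>z. f0 z *\<^sub>R z);
          H = (\<chi> i j. integral\<^sup>L lebesgue (\<lambda>z. (z $ i * z $ j) * f0 (z + c)))
      in Inf {integral\<^sup>L lebesgue (\<lambda>z. \<E> z * f0 (matrix_inv A *v z + b)) | b A.
                 det A = 1}
         = N * V0 + real (2 * n) * det (V ** H) powr (1 / real (2 * n)))"
proof -
  have "pos_def V" using Vsym Vpos by (simp add: pos_def_def)
  moreover have "has_second_moments f0" using f0_int f0_mom2 by (simp add: has_second_moments_def)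
  moreover have "integral\<^sup>L lebesgue f0 \<noteq> 0"
    using f0_nz f0_nonneg integral_nonneg_eq_0_iff_AE[OF f0_int] by auto
  ultimately show ?thesis
    using Inf_quadratic_cost_det_one[of V f0 V0 d] f0_nonneg dim
    by (simp add: Let_def first_moment_def second_moment_def det_mul)
qed

end
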